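(* Let $\mathbf L\in\mathbb R_+^{n\times k}$ and $\boldsymbol\psi:\mathcal C\to\mathbb R_+^n$. Suppose there exist $r\in\mathbb N$ and $\mathbf z_1,\dots,\mathbf z_r\in\mathcal R_\psi$ such that $\bigcup_{j=1}^r\mathcal N^\psi(\mathbf z_j)=\Delta_n$ and for each $j\in[r]$ there exists $t\in[k]$ with $\mathcal N^\psi(\mathbf z_j)\subseteq\mathcal Q^{\mathbf L}_t$. Then every $\mathbf z\in\mathcal S_\psi$ can be written as $\mathbf z=\mathbf z'+\mathbf z''$ for some $\mathbf z'\in\operatorname{conv}(\{\mathbf z_1,\dots,\mathbf z_r\})$ and $\mathbf z''\in\mathbb R_+^n$.
   Context: Notation: $[m]=\{1,\dots,m\}$; $\Delta_n=\{\mathbf p\in\mathbb R_+^n:\sum_i p_i=1\}$. A loss matrix $\mathbf L\in\mathbb R_+^{n\times k}$ has columns $\boldsymbol\ell_t$, $t\in[k]$. A surrogate loss is $\boldsymbol\psi:\mathcal C\to\mathbb R_+^n$ with $\mathcal C\subseteq\mathbb R^d$ convex; $\mathcal R_\psi=\boldsymbol\psi(\mathcal C)$, $\mathcal S_\psi=\operatorname{conv}(\mathcal R_\psi)$. Trigger probability set: $\mathcal Q^{\mathbf L}_t=\{\mathbf p\in\Delta_n: t\in\operatorname{argmin}_{t'\in[k]}\mathbf p^\top\boldsymbol\ell_{t'}\}$. Positive normal set at $\mathbf z\in\mathcal S_\psi$: $\mathcal N^\psi(\mathbf z)=\{\mathbf p\in\Delta_n:\mathbf p^\top\mathbf z=\inf_{\mathbf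 z'\in\mathcal S_\psi}\mathbf p^\top\mathbf z'\}$. *)

theory Defs
  imports "HOL-Analysis.Analysis"
begin

text \<open>Vectors in R^n are modelled as real^'n with a finite index type 'n (outcomes),
  predictions [k] as a finite type 'k; a loss matrix is L :: real^'k^'n, with L$y$t
  the loss of prediction t on outcome y; column t is the vector (\<chi> y. L$y$t).\<close>

definition nonneg_orthant :: "(real^'n) set" where
  "nonneg_orthant = {x. \<forall>i. 0 \<le> x$i}"

definition prob_simplex :: "(real^'n) set" where
  "prob_simplex = {p. (\<forall>i. 0 \<le> p$i) \<and> (\<Sum>i\<in>UNIV. p$i) = 1}"

definition loss_col :: "real^'k^'n \<Rightarrow> 'k \<Rightarrow> real^'n" where
  "loss_col L t = (\<chi> y. L$y$t)"

definition trigger_set :: "real^'k^'n \<Rightarrow> 'k \<Rightarrow> (real^'n) set" where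
  "trigger_set L t = {p \<in> prob_simplex. \<forall>t'. p \<bullet> loss_col L t \<le> p \<bullet> loss_col L t'}"

definition surr_range :: "('d \<Rightarrow> real^'n) \<Rightarrow> 'd set \<Rightarrow> (real^'n) set" where
  "surr_range psi C = psi ` C"

definition surr_hull :: "('d \<Rightarrow> real^'n) \<Rightarrow> 'd set \<Rightarrow> (real^'n) set" where
  "surr_hull psi C = convex hull (surr_range psi C)"

definition pos_normal_set :: "('d \<Rightarrow> real^'n) \<Rightarrow> 'd set \<Rightarrow> real^'n \<Rightarrow> (real^'n) set" where
  "pos_normal_set psi C z =
     {p \<in> prob_simplex. p \<bullet> z = Inf ((\<lambda>z'. p \<bullet> z') ` surr_hull psi C)}"

end

theory Submission
  imports Defs
begin

(* Let H = conv{z_1,...,z_r} and let H + R^n_+ be its upward closure;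
   the claim is that the surrogate hull S lies in H + R^n_+.  The upward closure is
   closed (compact plus closed) and convex, so a point z outside it is strictly
   separated from it by a hyperplane.  Because the set is closed under adding
   nonnegative vectors, the normal a of that hyperplane must be nonnegative, hence
   after normalisation a probability vector p, with p.z < p.z_j for every j.
   The normal sets of the z_j cover the simplex, so p lies in the normal set of
   some z_j, i.e. z_j minimises p.(-) over S.  As S lies in the nonnegative
   orthant this infimum is a genuine lower bound, so p.z_j <= p.z for z in S:
   contradiction. *)

lemma closed_nonneg_orthant: "closed (nonneg_orthant :: (real^'n) set)"
proof -
  have "nonneg_orthant = (\<Inter>i. {x::real^'n. 0 \<le> x$i})"
    unfolding nonneg_orthant_def by auto
  moreover have "closed {x::real^'n. 0 \<le> x$i}" for i
    by (intro closed_Collect_le continuous_intros)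
  ultimately show ?thesis by (metis closed_INT)
qed

lemma convex_nonneg_orthant: "convex (nonneg_orthant :: (real^'n) set)"
  unfolding nonneg_orthant_def convex_def by (auto intro!: add_nonneg_nonneg)

lemma zero_in_nonneg_orthant: "0 \<in> nonneg_orthant"
  unfolding nonneg_orthant_def by simp

lemma inner_simplex_orthant_nonneg:
  assumes "p \<in> prob_simplex" "x \<in> nonneg_orthant"
  shows "0 \<le> p \<bullet> x"
  using assms unfolding nonneg_orthant_def prob_simplex_def
  by (auto simp: inner_vec_def intro!: sum_nonneg)

lemma prob_simplex_nonempty: "prob_simplex \<noteq> ({} :: (real^'n::finite) set)"
proof -
  have "(\<chi> i. 1 / real CARD('n)) \<in> (prob_simplex :: (real^'n) set)"
    unfolding prob_simplex_def by auto
  then show ?thesis by blast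
qed

lemma normalise_to_simplex:
  fixes a :: "real^'n::finite"
  assumes "a \<in> nonneg_orthant" "a \<noteq> 0"
  shows "\<exists>c>0. c *\<^sub>R a \<in> prob_simplex"
proof -
  obtain i where "a$i \<noteq> 0" using assms(2) by (metis vec_eq_iff zero_index)
  define s where "s = (\<Sum>i\<in>UNIV. a$i)"
  have nonneg: "0 \<le> a$i" for i using assms(1) unfolding nonneg_orthant_def by auto
  have "a$i \<le> s" unfolding s_def using nonneg by (intro member_le_sum) auto
  then have "0 < s" using nonneg[of i] \<open>a$i \<noteq> 0\<close> by linarith
  moreover have "(1/s) *\<^sub>R a \<in> prob_simplex"
    unfolding prob_simplex_def using \<open>0 < s\<close> nonneg
    by (auto simp: s_def sum_divide_distrib[symmetric])
  ultimately show ?thesis by (intro exI[of _ "1/s"]) auto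
qed

definition up_closure :: "(real^'n) set \<Rightarrow> (real^'n) set" where
  "up_closure H = (\<Union>y\<in>nonneg_orthant. \<Union>h\<in>H. {y + h})"

lemma up_closure_iff: "x \<in> up_closure H \<longleftrightarrow> (\<exists>h\<in>H. \<exists>y\<in>nonneg_orthant. x = h + y)"
  unfolding up_closure_def by (metis (no_types, lifting) UN_iff add.commute singletonD singletonI)

text \<open>Nonnegativity of a holds because a.x must stay bounded
  below on the set, which contains h + t e_i for all t >= 0.\<close>
lemma separate_from_up_closure:
  fixes H :: "(real^'n) set"
  assumes "compact H" "convex H" "H \<noteq> {}" "z \<notin> up_closure H"
  shows "\<exists>a\<in>nonneg_orthant. a \<noteq> 0 \<and> (\<forall>h\<in>H. a \<bullet> z < a \<bullet> h)"
proof -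
  have "closed (up_closure H)"
    unfolding up_closure_def by (rule closed_compact_sums[OF closed_nonneg_orthant assms(1)])
  moreover have "convex (up_closure H)"
    unfolding up_closure_def by (intro convex_sums convex_nonneg_orthant assms(2))
  ultimately obtain a b where below: "a \<bullet> z < b" and above: "\<forall>x\<in>up_closure H. b < a \<bullet> x"
    using separating_hyperplane_closed_point assms(4) by blast
  have shifted: "b < a \<bullet> (h + y)" if "h \<in> H" "y \<in> nonneg_orthant" for h y
    using above that up_closure_iff by blast
  have on_H: "b < a \<bullet> h" if "h \<in> H" for h
    using shifted[OF that zero_in_nonneg_orthant] by simp
  obtain h0 where h0: "h0 \<in> H" using assms(3) by blast
  have "0 \<le> a$i" for i
  proof (rule ccontr)
    assume neg: "\<not> 0 \<le> a$i"
    define t where "t = (a \<bullet> h0 - b) / (- a$i)"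
    have "0 \<le> t" using on_H[OF h0] neg unfolding t_def by (intro divide_nonneg_nonneg) auto
    then have "t *\<^sub>R axis i 1 \<in> nonneg_orthant"
      unfolding nonneg_orthant_def by (auto simp: axis_def)
    then have "b < a \<bullet> (h0 + t *\<^sub>R axis i 1)" using shifted[OF h0] by blast
    also have "a \<bullet> (h0 + t *\<^sub>R axis i 1) = a \<bullet> h0 + t * a$i"
      by (simp add: inner_add_right inner_axis)
    also have "\<dots> = b" using neg unfolding t_def by (simp add: field_simps)
    finally show False by simp
  qed
  then have "a \<in> nonneg_orthant" unfolding nonneg_orthant_def by auto
  moreover have "a \<noteq> 0" using below on_H[OF h0] by auto
  ultimately show ?thesis using below on_H by (meson less_trans)
qed

lemma surr_hull_nonneg:
  assumes "\<forall>x\<in>C. psi x \<in> nonneg_orthant"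
  shows "surr_hull psi C \<subseteq> nonneg_orthant"
  unfolding surr_hull_def surr_range_def
  by (rule hull_minimal) (use assms convex_nonneg_orthant in auto)

text \<open>A point whose positive normal set contains p minimises p.(-) over the
  surrogate hull; the infimum is attained as a lower bound because the hull lies
  in the nonnegative orthant, where p.(-) is bounded below by 0.\<close>
lemma pos_normal_set_minimises:
  assumes "\<forall>x\<in>C. psi x \<in> nonneg_orthant"
    and "p \<in> pos_normal_set psi C w" and "z \<in> surr_hull psi C"
  shows "p \<bullet> w \<le> p \<bullet> z"
proof -
  have p: "p \<in> prob_simplex" and eq: "p \<bullet> w = Inf ((\<lambda>z'. p \<bullet> z') ` surr_hull psi C)"
    using assms(2) unfolding pos_normal_set_def by auto
  have "bdd_below ((\<lambda>z'. p \<bullet> z') ` surr_hull psi C)"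
    using inner_simplex_orthant_nonneg[OF p] surr_hull_nonneg[OF assms(1)]
    by (intro bdd_belowI2[where m=0]) blast
  then show ?thesis unfolding eq using assms(3) by (intro cInf_lower) auto
qed

theorem mainTheorem6:
  fixes L :: "real^'k::finite^'n::finite"
    and psi :: "real^'d::finite \<Rightarrow> real^'n"
    and C :: "(real^'d) set"
    and r :: nat
    and zs :: "nat \<Rightarrow> real^'n"
  assumes L_nonneg: "\<forall>y t. 0 \<le> L$y$t"
    and C_convex: "convex C"
    and psi_nonneg: "\<forall>x\<in>C. psi x \<in> nonneg_orthant"
    and zs_range: "\<forall>j\<in>{1..r}. zs j \<in> surr_range psi C"
    and cover: "(\<Union>j\<in>{1..r}. pos_normal_set psi C (zs j)) = prob_simplex"
    and trig: "\<forall>j\<in>{1..r}. \<exists>t. pos_normal_set psi C (zs j) \<subseteq> trigger_set L t"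
  shows "\<forall>z\<in>surr_hull psi C. \<exists>z' z''. z' \<in> convex hull (zs ` {1..r}) \<and>
            z'' \<in> nonneg_orthant \<and> z = z' + z''"
proof (rule ballI, rule ccontr)
  fix z assume zS: "z \<in> surr_hull psi C"
    and nz: "\<not> (\<exists>z' z''. z' \<in> convex hull (zs ` {1..r}) \<and> z'' \<in> nonneg_orthant \<and> z = z' + z'')"
  define H where "H = convex hull (zs ` {1..r})"
  have "{1..r} \<noteq> {}" using cover prob_simplex_nonempty by auto
  then have "H \<noteq> {}" unfolding H_def by simp
  moreover have "compact H" unfolding H_def by (intro compact_convex_hull finite_imp_compact) auto
  moreover have "z \<notin> up_closure H" using nz unfolding H_def up_closure_iff by blast
  ultimately obtain a where a: "a \<in> nonneg_orthant" "a \<noteq> 0" and sep: "\<forall>h\<in>H. a \<bullet> z < a \<bullet> h"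
    using separate_from_up_closure[of H z] unfolding H_def by auto
  obtain c where "c > 0" and p: "c *\<^sub>R a \<in> prob_simplex" using normalise_to_simplex[OF a] by blast
  then obtain j where j: "j \<in> {1..r}" "c *\<^sub>R a \<in> pos_normal_set psi C (zs j)" using cover by blast
  have "(c *\<^sub>R a) \<bullet> zs j \<le> (c *\<^sub>R a) \<bullet> z"
    using pos_normal_set_minimises[OF psi_nonneg j(2) zS] .
  moreover have "a \<bullet> z < a \<bullet> zs j" using sep j(1) unfolding H_def by (simp add: hull_inc)
  ultimately show False using \<open>c > 0\<close> by simp
qed

end
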